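(* There exists no binary orthogonal array of parameters $(n,M,\tau)=(10,192,5)$, i.e. of length $10$, cardinality $192=6\cdot 2^5$ and strength $5$.
   Context: A binary orthogonal array of parameters $(n,M,\tau)$ is the multiset of rows of an $M\times n$ binary matrix such that every $M\times\tau$ submatrix contains each ordered $\tau$-tuple of $\{0,1\}^\tau$ exactly $M/2^\tau$ times as rows. *)

theory Defs
  imports Main "HOL-Library.Multiset"
begin

definition binary_OA :: "nat \<Rightarrow> nat \<Rightarrow> nat \<Rightarrow> bool list multiset \<Rightarrow> bool" where
  "binary_OA n M \<tau> C \<longleftrightarrow>
     size C = M \<and>
     (\<forall>r \<in># C. length r = n) \<and>
     \<tau> \<le> n \<and>
     (\<forall>cols t. distinct cols \<and> length cols = \<tau> \<and> set cols \<subseteq> {0..<n} \<and> length t = \<tau> \<longrightarrow>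
        2 ^ \<tau> * size (filter_mset (\<lambda>r. map (\<lambda>i. r ! i) cols = t) C) = M)"

end

theory Submission
  imports Defs
begin

(* Let S U = (SUM r in C. (-1)^|{i in U. r ! i}|) be the Walsh coefficients of an OA(10, 192, 5) C.
   Strength 5 gives S {} = 192 and S U = 0 for 1 <= |U| <= 5, and summing S over the subsets of U
   counts 2^|U| times the rows vanishing on U; by induction on |U| this makes every S U divisible
   by 64, and the sum over the subsets of U divisible by 128 once |U| >= 7.  A second-moment
   argument with a Walsh polynomial of degree 2 shows that C has no repeated rows, so Parseval
   gives (SUM |U| >= 6. (S U / 64)^2) = 39: at most 39 sets U have S U / 64 odd.  On the other
   hand, as S {} / 64 = 3 is odd, every U with |U| >= 7 contains an odd number of these sets, and
   double counting over their sizes 6 to 9 shows that such a family has at least 40 members. *)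

lemma card_subsets_between:
  assumes "finite u" "v \<subseteq> u" "card v \<le> m"
  shows "card {w. v \<subseteq> w \<and> w \<subseteq> u \<and> card w = m} = (card u - card v) choose (m - card v)"
proof -
  have "finite v" using assms(1,2) finite_subset by blast
  have card_union: "card (x \<union> v) = m" if "x \<subseteq> u - v" "card x = m - card v" for x
  proof -
    have "finite x" using that(1) assms(1) finite_subset by blast
    then show ?thesis using that assms(3) \<open>finite v\<close> by (subst card_Un_disjoint) auto
  qed
  have "bij_betw (\<lambda>x. x \<union> v) {x. x \<subseteq> u - v \<and> card x = m - card v} {w. v \<subseteq> w \<and> w \<subseteq> u \<and> card w = m}"
  proof (rule bij_betw_byWitness[where f' = "\<lambda>w. w - v"])
    show "(\<lambda>x. x \<union> v) ` {x. x \<subseteq> u - v \<and> card x = m - card v} \<subseteq> {w. v \<subseteq> w \<and> w \<subseteq> u \<and> card w = m}"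
      using card_union assms(2) by auto
    show "(\<lambda>w. w - v) ` {w. v \<subseteq> w \<and> w \<subseteq> u \<and> card w = m} \<subseteq> {x. x \<subseteq> u - v \<and> card x = m - card v}"
      using \<open>finite v\<close> by (auto simp: card_Diff_subset)
  qed auto
  then have "card {w. v \<subseteq> w \<and> w \<subseteq> u \<and> card w = m} = card {x. x \<subseteq> u - v \<and> card x = m - card v}"
    by (simp add: bij_betw_same_card)
  also have "\<dots> = (card u - card v) choose (m - card v)"
    using assms \<open>finite v\<close> by (simp add: n_subsets card_Diff_subset)
  finally show ?thesis .
qed

lemma sum_card_layer_below:
  fixes F :: "'a set set"
  assumes "finite u" "j \<le> m"
  shows "(\<Sum>w | w \<subseteq> u \<and> card w = m. card {V\<in>F. V \<subseteq> w \<and> card V = j})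
       = card {V\<in>F. V \<subseteq> u \<and> card V = j} * ((card u - j) choose (m - j))"
proof -
  let ?W = "{w. w \<subseteq> u \<and> card w = m}" and ?G = "{V\<in>F. V \<subseteq> u \<and> card V = j}"
  have fin: "finite ?W" "finite ?G" using assms(1) by auto
  have "(\<Sum>w\<in>?W. card {V\<in>F. V \<subseteq> w \<and> card V = j}) = (\<Sum>w\<in>?W. \<Sum>V\<in>{V\<in>?G. V \<subseteq> w}. 1)"
    by (intro sum.cong refl) (auto intro!: arg_cong[where f = card])
  also have "\<dots> = (\<Sum>V\<in>?G. \<Sum>w\<in>{w\<in>?W. V \<subseteq> w}. 1)"
    by (rule sum.swap_restrict[OF fin])
  also have "\<dots> = (\<Sum>V\<in>?G. (card u - j) choose (m - j))"
  proof (rule sum.cong[OF refl])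
    fix V assume "V \<in> ?G"
    then have "{w\<in>?W. V \<subseteq> w} = {w. V \<subseteq> w \<and> w \<subseteq> u \<and> card w = m}" "V \<subseteq> u" "card V = j"
      by auto
    then show "(\<Sum>w\<in>{w\<in>?W. V \<subseteq> w}. 1) = (card u - j) choose (m - j)"
      using card_subsets_between[OF assms(1), of V m] assms(2) by simp
  qed
  finally show ?thesis by simp
qed

lemma card_eq_sum_layers:
  assumes "finite u"
  shows "card {V\<in>F. V \<subseteq> u} = (\<Sum>j\<le>card u. card {V\<in>F. V \<subseteq> u \<and> card V = j})"
proof -
  have "{V\<in>F. V \<subseteq> u} = (\<Union>j\<le>card u. {V\<in>F. V \<subseteq> u \<and> card V = j})"
    using card_mono[OF assms] by auto
  then show ?thesis
    using assms by (simp add: card_UN_disjoint disjoint_iff)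
qed

lemma sum_odd_nat:
  fixes g :: "'a \<Rightarrow> nat"
  assumes "finite A" "\<And>a. a \<in> A \<Longrightarrow> odd (g a)"
  shows "card A \<le> sum g A" and "even (sum g A) \<longleftrightarrow> even (card A)"
proof -
  have "(\<Sum>a\<in>A. 1) \<le> sum g A"
    using assms(2) by (intro sum_mono) (metis odd_pos Suc_leI One_nat_def)
  then show "card A \<le> sum g A" by simp
  have "{a\<in>A. odd (g a)} = A" using assms(2) by auto
  then show "even (sum g A) \<longleftrightarrow> even (card A)"
    using even_sum_iff[OF assms(1), of g] by simp
qed

lemma card_odd_le_sum_squares:
  fixes g :: "'a \<Rightarrow> int"
  assumes "finite A"
  shows "int (card {a\<in>A. odd (g a)}) \<le> (\<Sum>a\<in>A. (g a)^2)"
proof -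
  have "int (card {a\<in>A. odd (g a)}) = (\<Sum>a\<in>{a\<in>A. odd (g a)}. 1)" by simp
  also have "\<dots> \<le> (\<Sum>a\<in>{a\<in>A. odd (g a)}. (g a)^2)"
  proof (rule sum_mono)
    fix a assume "a \<in> {a\<in>A. odd (g a)}"
    then have "g a \<noteq> 0" by auto
    then show "1 \<le> (g a)^2"
      by (simp add: int_one_le_iff_zero_less)
  qed
  also have "\<dots> \<le> (\<Sum>a\<in>A. (g a)^2)"
    using assms by (intro sum_mono2) auto
  finally show ?thesis .
qed

lemma sum_Pow_eq_empty_plus_large:
  fixes g :: "'a set \<Rightarrow> int"
  assumes "finite W" "0 < k" "\<And>U. U \<subseteq> W \<Longrightarrow> U \<noteq> {} \<Longrightarrow> card U < k \<Longrightarrow> g U = 0"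
  shows "(\<Sum>U\<in>Pow W. g U) = g {} + (\<Sum>U | U \<subseteq> W \<and> k \<le> card U. g U)"
proof -
  have "(\<Sum>U\<in>Pow W. g U) = (\<Sum>U\<in>Pow W. (if U = {} then g {} else 0) + (if k \<le> card U then g U else 0))"
    using assms(2,3) by (intro sum.cong refl) auto
  also have "\<dots> = g {} + (\<Sum>U\<in>{U\<in>Pow W. k \<le> card U}. g U)"
    using assms(1) by (simp add: sum.distrib sum.inter_filter[symmetric])
  also have "{U\<in>Pow W. k \<le> card U} = {U. U \<subseteq> W \<and> k \<le> card U}" by auto
  finally show ?thesis .
qed

lemma subsets_card_2_insert:
  assumes "j \<notin> I"
  shows "{V. V \<subseteq> insert j I \<and> card V = 2} = {V. V \<subseteq> I \<and> card V = 2} \<union> (\<lambda>i. {j, i}) ` I"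
proof (rule set_eqI, rule iffI)
  fix V assume V: "V \<in> {V. V \<subseteq> insert j I \<and> card V = 2}"
  then obtain a b where "V = {a, b}" "a \<noteq> b" by (auto simp: card_2_iff)
  then show "V \<in> {V. V \<subseteq> I \<and> card V = 2} \<union> (\<lambda>i. {j, i}) ` I"
    using V assms by (cases "j \<in> V") auto
next
  fix V assume "V \<in> {V. V \<subseteq> I \<and> card V = 2} \<union> (\<lambda>i. {j, i}) ` I"
  then show "V \<in> {V. V \<subseteq> insert j I \<and> card V = 2}"
    using assms by (auto, metis card_2_iff)
qed

lemma sum_subsets_card_le_2:
  assumes "finite I"
  shows "(\<Sum>V | V \<subseteq> I \<and> card V \<le> 2. g V)
       = g {} + (\<Sum>i\<in>I. g {i}) + (\<Sum>V | V \<subseteq> I \<and> card V = 2. g V)"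
proof -
  have split: "{V. V \<subseteq> I \<and> card V \<le> 2} = insert {} ((\<lambda>i. {i}) ` I) \<union> {V. V \<subseteq> I \<and> card V = 2}"
  proof (rule set_eqI, rule iffI)
    fix V assume V: "V \<in> {V. V \<subseteq> I \<and> card V \<le> 2}"
    then have "finite V" using assms finite_subset by blast
    moreover have "card V = 0 \<or> card V = 1 \<or> card V = 2" using V by auto
    ultimately show "V \<in> insert {} ((\<lambda>i. {i}) ` I) \<union> {V. V \<subseteq> I \<and> card V = 2}"
      using V by (auto simp: card_1_singleton_iff)
  qed auto
  have "(\<Sum>V\<in>insert {} ((\<lambda>i. {i}) ` I). g V) = g {} + (\<Sum>i\<in>I. g {i})"
    using assms by (subst sum.insert) (auto simp: sum.reindex inj_on_def)
  then show ?thesis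
    unfolding split using assms by (subst sum.union_disjoint) auto
qed

lemma card_subsets_card_le_2:
  assumes "finite I"
  shows "card {V. V \<subseteq> I \<and> card V \<le> 2} = 1 + card I + (card I choose 2)"
  using sum_subsets_card_le_2[OF assms, of "\<lambda>_. 1 :: nat"] assms by (simp add: n_subsets)

lemma card_sym_diff_le:
  assumes "finite V" "finite V'"
  shows "card (V - V' \<union> (V' - V)) \<le> card V + card V'"
  using card_Un_le[of "V - V'" "V' - V"] card_mono[OF assms(1), of "V - V'"] card_mono[OF assms(2), of "V' - V"]
  by auto

lemma sum_Pow_prod_signs:
  fixes e :: "'a \<Rightarrow> int"
  assumes "finite U" "\<And>i. i \<in> U \<Longrightarrow> e i = 1 \<or> e i = -1"
  shows "(\<Sum>V\<in>Pow U. \<Prod>i\<in>V. e i) = (if \<forall>i\<in>U. e i = 1 then 2 ^ card U else 0)"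
proof -
  have "(\<Sum>V\<in>Pow U. \<Prod>i\<in>V. e i) = (\<Prod>i\<in>U. e i + 1)"
    using prod_add[OF assms(1), of e "\<lambda>_. 1"] by simp
  also have "\<dots> = (if \<forall>i\<in>U. e i = 1 then 2 ^ card U else 0)"
  proof (cases "\<forall>i\<in>U. e i = 1")
    case True
    then show ?thesis by simp
  next
    case False
    then obtain i where "i \<in> U" "e i = -1" using assms(2) by blast
    then have "(\<Prod>i\<in>U. e i + 1) = 0"
      using assms(1) by (intro prod_zero bexI[of _ i]) simp_all
    then show ?thesis using False by simp
  qed
  finally show ?thesis .
qed

lemma sum_signs_eq_card_diff:
  assumes "finite I"
  shows "(\<Sum>i\<in>I. if P i then 1 else -1 :: int) = int (card I) - 2 * int (card {i\<in>I. \<not> P i})"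
proof -
  have "(\<Sum>i\<in>I. if P i then 1 else -1 :: int) = (\<Sum>i\<in>I. 1 - 2 * (if \<not> P i then 1 else 0))"
    by (intro sum.cong) auto
  also have "\<dots> = int (card I) - 2 * int (card {i\<in>I. \<not> P i})"
    using assms sum.inter_filter[OF assms, of "\<lambda>_. 1::int" "\<lambda>i. \<not> P i"]
    by (simp add: sum_subtractf sum_distrib_left[symmetric])
  finally show ?thesis .
qed

lemma square_sum_signs:
  fixes e :: "'a \<Rightarrow> int"
  assumes "finite I" "\<And>i. i \<in> I \<Longrightarrow> e i * e i = 1"
  shows "(\<Sum>i\<in>I. e i)^2 = int (card I) + 2 * (\<Sum>V | V \<subseteq> I \<and> card V = 2. \<Prod>i\<in>V. e i)"
  using assms
proof (induction I rule: finite_induct)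
  case empty
  have "{V. V \<subseteq> {} \<and> card V = 2} = {}" by auto
  then show ?case by simp
next
  case (insert j I)
  have pairs: "(\<Sum>V\<in>(\<lambda>i. {j, i}) ` I. \<Prod>k\<in>V. e k) = e j * (\<Sum>i\<in>I. e i)"
  proof -
    have "inj_on (\<lambda>i. {j, i}) I" using insert.hyps by (auto simp: inj_on_def doubleton_eq_iff)
    then have "(\<Sum>V\<in>(\<lambda>i. {j, i}) ` I. \<Prod>k\<in>V. e k) = (\<Sum>i\<in>I. \<Prod>k\<in>{j, i}. e k)"
      by (rule sum.reindex_cong) auto
    also have "\<dots> = (\<Sum>i\<in>I. e j * e i)"
    proof (intro sum.cong refl)
      fix i assume "i \<in> I"
      then have "i \<noteq> j" using insert.hyps by auto
      then show "(\<Prod>k\<in>{j, i}. e k) = e j * e i" by simp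
    qed
    finally show ?thesis by (simp add: sum_distrib_left)
  qed
  have "(\<Sum>V | V \<subseteq> insert j I \<and> card V = 2. \<Prod>k\<in>V. e k)
      = (\<Sum>V | V \<subseteq> I \<and> card V = 2. \<Prod>k\<in>V. e k) + e j * (\<Sum>i\<in>I. e i)"
    unfolding subsets_card_2_insert[OF insert.hyps(2)] pairs[symmetric]
    using insert.hyps by (intro sum.union_disjoint) auto
  moreover have "e j * e j = 1" using insert.prems by simp
  ultimately show ?case
    using insert by (simp add: power2_eq_square algebra_simps)
qed

lemma sum_prod_subsets_card_le_2:
  fixes e :: "'a \<Rightarrow> int"
  assumes "finite I" "\<And>i. i \<in> I \<Longrightarrow> e i * e i = 1"
  shows "2 * (\<Sum>V | V \<subseteq> I \<and> card V \<le> 2. \<Prod>i\<in>V. e i)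
       = (\<Sum>i\<in>I. e i)^2 + 2 * (\<Sum>i\<in>I. e i) + 2 - int (card I)"
  using sum_subsets_card_le_2[OF assms(1), of "\<lambda>V. \<Prod>i\<in>V. e i"] square_sum_signs[OF assms]
  by simp

section \<open>Walsh characters\<close>

lemma sum_mset_sum_swap:
  "(\<Sum>r\<in>#M. \<Sum>a\<in>A. g a r) = (\<Sum>a\<in>A. \<Sum>r\<in>#M. g a r)"
  by (induction M) (auto simp: sum.distrib)

definition walsh :: "(nat \<Rightarrow> bool) \<Rightarrow> nat set \<Rightarrow> bool list \<Rightarrow> int" where
  "walsh y U r = (\<Prod>i\<in>U. if r ! i = y i then 1 else -1)"

lemma walsh_empty [simp]: "walsh y {} r = 1"
  by (simp add: walsh_def)

lemma walsh_insert:
  "finite U \<Longrightarrow> j \<notin> U \<Longrightarrow> walsh y (insert j U) r = (if r ! j = y j then 1 else -1) * walsh y U r"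
  by (simp add: walsh_def)

lemma sum_mset_walsh_insert:
  assumes "finite U" "j \<notin> U"
  shows "(\<Sum>r\<in>#M. walsh y (insert j U) r)
       = (\<Sum>r\<in>#filter_mset (\<lambda>r. r ! j = y j) M. walsh y U r)
         - (\<Sum>r\<in>#filter_mset (\<lambda>r. r ! j = (\<not> y j)) M. walsh y U r)"
  by (induction M) (auto simp: walsh_insert[OF assms])

lemma walsh_mult:
  assumes "finite V" "finite V'"
  shows "walsh y V r * walsh y V' r = walsh y (V - V' \<union> (V' - V)) r"
proof -
  have square: "walsh y (V \<inter> V') r * walsh y (V \<inter> V') r = 1"
    unfolding walsh_def prod.distrib[symmetric] by (intro prod.neutral) auto
  have "walsh y V r = walsh y (V \<inter> V') r * walsh y (V - V') r"
    unfolding walsh_def by (rule prod.Int_Diff[OF assms(1)])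
  moreover have "walsh y V' r = walsh y (V \<inter> V') r * walsh y (V' - V) r"
    unfolding walsh_def Int_commute[of V] by (rule prod.Int_Diff[OF assms(2)])
  moreover have "walsh y (V - V' \<union> (V' - V)) r = walsh y (V - V') r * walsh y (V' - V) r"
    unfolding walsh_def using assms by (intro prod.union_disjoint) auto
  ultimately show ?thesis
    using square by (simp add: algebra_simps)
qed

lemma walsh_sum_card_le_2:
  assumes "finite I"
  shows "2 * (\<Sum>V | V \<subseteq> I \<and> card V \<le> 2. walsh y V r)
       = (int (card I) - 2 * int (card {i\<in>I. r ! i \<noteq> y i}))^2
         + 2 * (int (card I) - 2 * int (card {i\<in>I. r ! i \<noteq> y i})) + 2 - int (card I)"
proof -
  define e where "e i = (if r ! i = y i then 1 else -1 :: int)" for i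
  have "(\<Sum>i\<in>I. e i) = int (card I) - 2 * int (card {i\<in>I. r ! i \<noteq> y i})"
    unfolding e_def using sum_signs_eq_card_diff[OF assms(1)] by simp
  moreover have "walsh y V r = (\<Prod>i\<in>V. e i)" for V
    by (simp add: walsh_def e_def)
  ultimately show ?thesis
    using sum_prod_subsets_card_le_2[OF assms(1), of e] by (simp add: e_def)
qed

(* With z disagreements, twice the sum is (10 - 2 * z)^2 - 8 by walsh_sum_card_le_2, which for
   1 <= z <= 9 never lies strictly between -4 and 4. *)
lemma walsh_sum_card_le_2_square_ge_4:
  assumes "finite I" "card I = 9" "\<exists>i\<in>I. r ! i \<noteq> y i"
  shows "4 \<le> (\<Sum>V | V \<subseteq> I \<and> card V \<le> 2. walsh y V r)^2"
proof -
  define z where "z = card {i\<in>I. r ! i \<noteq> y i}"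
  have "z \<le> 9"
    using card_mono[OF assms(1), of "{i\<in>I. r ! i \<noteq> y i}"] assms(2) by (auto simp: z_def)
  moreover have "z \<noteq> 0"
    using assms(1,3) by (auto simp: z_def)
  ultimately have "z \<in> {1, 2, 3, 4, 5, 6, 7, 8, 9}" by auto
  then have "(\<Sum>V | V \<subseteq> I \<and> card V \<le> 2. walsh y V r) \<in> {28, 14, 4, -2, -4}"
    using walsh_sum_card_le_2[OF assms(1), of y r] assms(2) unfolding z_def[symmetric] by auto
  then show ?thesis by auto
qed

lemma sum_mset_square_walsh_sum:
  assumes "finite VV" "\<And>V. V \<in> VV \<Longrightarrow> finite V"
    and orth: "\<And>V V'. V \<in> VV \<Longrightarrow> V' \<in> VV \<Longrightarrow> V \<noteq> V' \<Longrightarrow>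
      (\<Sum>r\<in>#R. walsh y (V - V' \<union> (V' - V)) r) = 0"
  shows "(\<Sum>r\<in>#R. (\<Sum>V\<in>VV. walsh y V r)^2) = int (size R) * int (card VV)"
proof -
  have "(\<Sum>r\<in>#R. (\<Sum>V\<in>VV. walsh y V r)^2)
      = (\<Sum>r\<in>#R. \<Sum>V\<in>VV. \<Sum>V'\<in>VV. walsh y (V - V' \<union> (V' - V)) r)"
    unfolding power2_eq_square sum_product
    by (intro arg_cong[where f = sum_mset] image_mset_cong sum.cong refl walsh_mult assms(2))
  also have "\<dots> = (\<Sum>V\<in>VV. \<Sum>V'\<in>VV. \<Sum>r\<in>#R. walsh y (V - V' \<union> (V' - V)) r)"
    by (simp add: sum_mset_sum_swap)
  also have "\<dots> = (\<Sum>V\<in>VV. \<Sum>V'\<in>VV. if V = V' then int (size R) else 0)"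
    using orth by (intro sum.cong refl) auto
  also have "\<dots> = int (size R) * int (card VV)"
    using assms(1) by simp
  finally show ?thesis .
qed

section \<open>Walsh coefficients of orthogonal arrays\<close>

lemma size_filter_mset_split:
  "size (filter_mset P M) = size (filter_mset (\<lambda>x. P x \<and> Q x) M) + size (filter_mset (\<lambda>x. P x \<and> \<not> Q x) M)"
  by (induction M) auto

lemma binary_OA_count:
  assumes "binary_OA n M \<tau> C" "W \<subseteq> {0..<n}" "card W = \<tau>"
  shows "2 ^ \<tau> * size (filter_mset (\<lambda>r. \<forall>i\<in>W. r ! i = f i) C) = M"
proof -
  have "finite W" using assms(2) finite_subset by blast
  define cols where "cols = sorted_list_of_set W"
  have cols: "distinct cols" "set cols = W" "length cols = \<tau>"
    using \<open>finite W\<close> assms(3) by (auto simp: cols_def)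
  have "\<forall>cols t. distinct cols \<and> length cols = \<tau> \<and> set cols \<subseteq> {0..<n} \<and> length t = \<tau> \<longrightarrow>
      2 ^ \<tau> * size (filter_mset (\<lambda>r. map (\<lambda>i. r ! i) cols = t) C) = M"
    using assms(1) unfolding binary_OA_def by blast
  then have "2 ^ \<tau> * size (filter_mset (\<lambda>r. map (\<lambda>i. r ! i) cols = map f cols) C) = M"
    using assms(2) cols by (simp only: length_map)
  moreover have "(\<lambda>r. map (\<lambda>i. r ! i) cols = map f cols) = (\<lambda>r. \<forall>i\<in>W. r ! i = f i)"
    using cols(2) by (auto simp: map_eq_conv)
  ultimately show ?thesis by simp
qed

lemma binary_OA_count_le:
  assumes OA: "binary_OA n M \<tau> C" and "W \<subseteq> {0..<n}" "card W \<le> \<tau>"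
  shows "2 ^ card W * size (filter_mset (\<lambda>r. \<forall>i\<in>W. r ! i = f i) C) = M"
  using assms(2,3)
proof (induction "\<tau> - card W" arbitrary: W f)
  case 0
  then show ?case using binary_OA_count[OF OA] by simp
next
  case (Suc k)
  have "finite W" using Suc.prems(1) finite_subset by blast
  have "\<tau> \<le> n" using OA by (simp add: binary_OA_def)
  then have "card W < card {0..<n}" using Suc.hyps(2) by simp
  then have "\<not> {0..<n} \<subseteq> W"
    using card_mono[OF \<open>finite W\<close>, of "{0..<n}"] by linarith
  then obtain j where j: "j \<in> {0..<n}" "j \<notin> W" by blast
  let ?P = "\<lambda>r. \<forall>i\<in>W. r ! i = f i"
  have half: "2 * 2 ^ card W * size (filter_mset (\<lambda>r. ?P r \<and> r ! j = b) C) = M" for b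
  proof -
    have "(\<lambda>r. \<forall>i\<in>insert j W. r ! i = (f(j := b)) i) = (\<lambda>r. ?P r \<and> r ! j = b)"
      using j by auto
    then show ?thesis
      using Suc.hyps(1)[of "insert j W" "f(j := b)"] Suc.hyps(2) Suc.prems j \<open>finite W\<close> by simp
  qed
  show ?case
    using size_filter_mset_split[of ?P C "\<lambda>r. r ! j"] half[of True] half[of False]
    by (simp add: algebra_simps)
qed

(* Induction on U: by the induction hypothesis both halves with the new coordinate j fixed give
   the same sum, and walsh y (insert j U) weighs them with opposite signs. *)
lemma binary_OA_walsh_sum:
  assumes OA: "binary_OA n M \<tau> C"
    and "U \<subseteq> {0..<n}" "W \<subseteq> {0..<n}" "U \<inter> W = {}" "card U + card W \<le> \<tau>"
  shows "2 ^ card W * (\<Sum>r\<in>#filter_mset (\<lambda>r. \<forall>i\<in>W. r ! i = f i) C. walsh y U r)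
       = (if U = {} then int M else 0)"
proof -
  have "finite U" using assms(2) finite_subset by blast
  then show ?thesis
    using assms(2-5)
  proof (induction U arbitrary: W f rule: finite_induct)
    case empty
    then show ?case
      using arg_cong[OF binary_OA_count_le[OF OA, of W f], of int] by simp
  next
    case (insert j U)
    let ?P = "\<lambda>r. \<forall>i\<in>W. r ! i = f i"
    let ?S = "\<lambda>b. (\<Sum>r\<in>#filter_mset (\<lambda>r. ?P r \<and> r ! j = b) C. walsh y U r)"
    have "finite W" using insert.prems(2) finite_subset by blast
    have "j \<notin> W" using insert.prems(3) by auto
    have half: "2 * 2 ^ card W * ?S b = (if U = {} then int M else 0)" for b
    proof -
      have "(\<lambda>r. \<forall>i\<in>insert j W. r ! i = (f(j := b)) i) = (\<lambda>r. ?P r \<and> r ! j = b)"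
        using \<open>j \<notin> W\<close> by auto
      then show ?thesis
        using insert.IH[of "insert j W" "f(j := b)"] insert.prems insert.hyps \<open>finite W\<close> \<open>j \<notin> W\<close>
        by simp
    qed
    have "(\<Sum>r\<in>#filter_mset ?P C. walsh y (insert j U) r) = ?S (y j) - ?S (\<not> y j)"
      using sum_mset_walsh_insert[OF insert.hyps, of y "filter_mset ?P C"] by (simp add: filter_filter_mset)
    moreover have "2 * 2 ^ card W * (?S (y j) - ?S (\<not> y j)) = 0"
      using half[of "y j"] half[of "\<not> y j"] by (simp add: right_diff_distrib)
    ultimately show ?case by simp
  qed
qed

definition walsh_coeff :: "bool list multiset \<Rightarrow> nat set \<Rightarrow> int" where
  "walsh_coeff C U = (\<Sum>r\<in>#C. walsh (\<lambda>_. False) U r)"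

lemma walsh_coeff_empty [simp]: "walsh_coeff C {} = int (size C)"
  by (simp add: walsh_coeff_def)

lemma binary_OA_walsh_coeff_eq_0:
  assumes "binary_OA n M \<tau> C" "U \<subseteq> {0..<n}" "U \<noteq> {}" "card U \<le> \<tau>"
  shows "walsh_coeff C U = 0"
  using binary_OA_walsh_sum[OF assms(1,2), of "{}"] assms(3,4) by (simp add: walsh_coeff_def)

lemma sum_Pow_walsh_coeff:
  assumes "finite U"
  shows "(\<Sum>V\<in>Pow U. walsh_coeff C V) = 2 ^ card U * int (size (filter_mset (\<lambda>r. \<forall>i\<in>U. \<not> r ! i) C))"
proof -
  have "(\<Sum>V\<in>Pow U. walsh_coeff C V) = (\<Sum>r\<in>#C. \<Sum>V\<in>Pow U. walsh (\<lambda>_. False) V r)"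
    unfolding walsh_coeff_def by (rule sum_mset_sum_swap[symmetric])
  also have "\<dots> = (\<Sum>r\<in>#C. if \<forall>i\<in>U. \<not> r ! i then 2 ^ card U else 0)"
  proof (intro arg_cong[where f = sum_mset] image_mset_cong)
    fix r
    show "(\<Sum>V\<in>Pow U. walsh (\<lambda>_. False) V r) = (if \<forall>i\<in>U. \<not> r ! i then 2 ^ card U else 0)"
      using sum_Pow_prod_signs[OF assms, of "\<lambda>i. if \<not> r ! i then 1 else -1"]
      by (simp add: walsh_def)
  qed
  also have "\<dots> = 2 ^ card U * int (size (filter_mset (\<lambda>r. \<forall>i\<in>U. \<not> r ! i) C))"
    by (induction C) (auto simp: algebra_simps)
  finally show ?thesis .
qed

lemma binary_OA_walsh_coeff_dvd:
  assumes OA: "binary_OA n M \<tau> C" and "2 ^ (\<tau> + 1) dvd int M" "U \<subseteq> {0..<n}"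
  shows "2 ^ (\<tau> + 1) dvd walsh_coeff C U"
  using assms(3)
proof (induction "card U" arbitrary: U rule: less_induct)
  case less
  have "finite U" using less.prems finite_subset by blast
  show ?case
  proof (cases "card U \<le> \<tau>")
    case True
    then show ?thesis
      using binary_OA_walsh_coeff_eq_0[OF OA less.prems] assms(2) OA
      by (cases "U = {}") (auto simp: binary_OA_def)
  next
    case False
    have "(2::int) ^ (\<tau> + 1) dvd 2 ^ card U"
      using False by (intro le_imp_power_dvd) simp
    then have "2 ^ (\<tau> + 1) dvd (\<Sum>V\<in>Pow U. walsh_coeff C V)"
      unfolding sum_Pow_walsh_coeff[OF \<open>finite U\<close>] by simp
    moreover have "2 ^ (\<tau> + 1) dvd (\<Sum>V\<in>Pow U - {U}. walsh_coeff C V)"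
    proof (rule dvd_sum)
      fix V assume "V \<in> Pow U - {U}"
      then have "V \<subset> U" by auto
      then show "2 ^ (\<tau> + 1) dvd walsh_coeff C V"
        using less.hyps[of V] psubset_card_mono[OF \<open>finite U\<close>] less.prems by auto
    qed
    moreover have "(\<Sum>V\<in>Pow U. walsh_coeff C V) = walsh_coeff C U + (\<Sum>V\<in>Pow U - {U}. walsh_coeff C V)"
      using \<open>finite U\<close> by (subst sum.remove[of _ U]) auto
    ultimately show ?thesis
      by (simp add: dvd_add_left_iff)
  qed
qed

lemma walsh_coeff_parseval:
  assumes "\<And>r. r \<in># C \<Longrightarrow> length r = n" "\<And>r. count C r \<le> 1"
  shows "(\<Sum>U\<in>Pow {0..<n}. (walsh_coeff C U)^2) = 2 ^ n * int (size C)"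
proof -
  let ?w = "walsh (\<lambda>_. False)"
  have orth: "(\<Sum>U\<in>Pow {0..<n}. ?w U r * ?w U r') = (if r = r' then 2 ^ n else 0)"
    if "r \<in># C" "r' \<in># C" for r r'
  proof -
    have "?w U r * ?w U r' = (\<Prod>i\<in>U. if r ! i = r' ! i then 1 else -1)" for U
      unfolding walsh_def prod.distrib[symmetric] by (intro prod.cong) auto
    then have "(\<Sum>U\<in>Pow {0..<n}. ?w U r * ?w U r') = (if \<forall>i\<in>{0..<n}. r ! i = r' ! i then 2 ^ n else 0)"
      using sum_Pow_prod_signs[of "{0..<n}" "\<lambda>i. if r ! i = r' ! i then 1 else -1"] by simp
    moreover have "(\<forall>i\<in>{0..<n}. r ! i = r' ! i) \<longleftrightarrow> r = r'"
      using assms(1) that by (auto intro: nth_equalityI)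
    ultimately show ?thesis by simp
  qed
  have "(\<Sum>U\<in>Pow {0..<n}. (walsh_coeff C U)^2) = (\<Sum>r\<in>#C. \<Sum>r'\<in>#C. \<Sum>U\<in>Pow {0..<n}. ?w U r * ?w U r')"
  proof -
    have "(walsh_coeff C U)^2 = (\<Sum>r\<in>#C. \<Sum>r'\<in>#C. ?w U r * ?w U r')" for U
      unfolding walsh_coeff_def power2_eq_square sum_mset_distrib_right
      by (simp add: sum_mset_distrib_left)
    then show ?thesis by (simp add: sum_mset_sum_swap[symmetric])
  qed
  also have "\<dots> = (\<Sum>r\<in>#C. \<Sum>r'\<in>#C. if r = r' then 2 ^ n else 0)"
    using orth by (intro arg_cong[where f = sum_mset] image_mset_cong) simp
  also have "\<dots> = (\<Sum>r\<in>#C. 2 ^ n)"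
  proof (intro arg_cong[where f = sum_mset] image_mset_cong)
    fix r assume "r \<in># C"
    then have "count C r = 1" using assms(2)[of r] by (simp add: le_antisym Suc_le_eq)
    then show "(\<Sum>r'\<in>#C. if r = r' then 2 ^ n else 0) = (2::int) ^ n"
      by (simp add: sum_mset_delta')
  qed
  finally show ?thesis by simp
qed

section \<open>Orthogonal arrays with parameters (10, 192, 5)\<close>

lemma nth_neq_above_0:
  assumes "length r = n" "length x = n" "r \<noteq> x" "r ! 0 = x ! 0"
  shows "\<exists>i\<in>{1..<n}. r ! i \<noteq> x ! i"
proof (rule ccontr)
  assume "\<not> (\<exists>i\<in>{1..<n}. r ! i \<noteq> x ! i)"
  then have "r ! i = x ! i" if "i < n" for i
    using assms(4) that by (cases "i = 0") auto
  then have "r = x" using assms(1,2) by (intro nth_equalityI) auto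
  with assms(3) show False ..
qed

(* The rows agreeing with y in coordinate 0 form an array of strength 4 on the other nine
   coordinates, on which the Walsh characters of degree at most 2 are orthogonal. *)
lemma OA_10_192_5_second_moment:
  assumes OA: "binary_OA 10 192 5 C"
  shows "(\<Sum>r\<in>#filter_mset (\<lambda>r. r ! 0 = y 0) C. (\<Sum>V | V \<subseteq> {1..<10} \<and> card V \<le> 2. walsh y V r)^2)
       = 96 * int (card {V. V \<subseteq> {1..<10::nat} \<and> card V \<le> 2})"
proof -
  define I where "I = {1..<10::nat}"
  define VV where "VV = {V. V \<subseteq> I \<and> card V \<le> 2}"
  define R where "R = filter_mset (\<lambda>r. \<forall>i\<in>{0}. r ! i = y i) C"
  have "finite I" by (simp add: I_def)
  have "int (size R) = 96"
    using binary_OA_walsh_sum[OF OA, of "{}" "{0}" y y] by (simp add: R_def)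
  moreover have orth: "(\<Sum>r\<in>#R. walsh y D r) = 0" if "D \<subseteq> I" "D \<noteq> {}" "card D \<le> 4" for D
  proof -
    have "D \<subseteq> {0..<10}" "{0} \<subseteq> {0..<10::nat}" "D \<inter> {0} = {}" "card D + card {0::nat} \<le> 5"
      using that by (auto simp: I_def)
    from binary_OA_walsh_sum[OF OA this, of y y] show ?thesis
      using that(2) by (simp add: R_def)
  qed
  have "(\<Sum>r\<in>#R. (\<Sum>V\<in>VV. walsh y V r)^2) = int (size R) * int (card VV)"
  proof (rule sum_mset_square_walsh_sum)
    show "finite VV" using \<open>finite I\<close> by (simp add: VV_def)
    show "finite V" if "V \<in> VV" for V
      using that \<open>finite I\<close> finite_subset by (auto simp: VV_def)
    fix V V' assume V: "V \<in> VV" "V' \<in> VV" "V \<noteq> V'"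
    then have "card (V - V' \<union> (V' - V)) \<le> card V + card V'"
      using \<open>finite I\<close> finite_subset by (intro card_sym_diff_le) (auto simp: VV_def)
    then show "(\<Sum>r\<in>#R. walsh y (V - V' \<union> (V' - V)) r) = 0"
      using V by (intro orth) (auto simp: VV_def)
  qed
  ultimately show ?thesis
    by (simp add: R_def VV_def I_def)
qed

(* As L x = 46 while (L r)^2 >= 4 for every other row r agreeing with x in coordinate 0, the
   second moment 96 * 46 leaves no room for a second copy of x. *)
lemma OA_10_192_5_no_repeated_rows:
  assumes OA: "binary_OA 10 192 5 C"
  shows "count C x \<le> 1"
proof (cases "x \<in># C")
  case False
  then show ?thesis by (simp add: not_in_iff)
next
  case True
  define y where "y i = x ! i" for i
  define I where "I = {1..<10::nat}"
  define VV where "VV = {V. V \<subseteq> I \<and> card V \<le> 2}"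
  define R where "R = filter_mset (\<lambda>r. r ! 0 = y 0) C"
  define L where "L r = (\<Sum>V\<in>VV. walsh y V r)" for r
  have "finite I" "card I = 9" by (simp_all add: I_def)
  have "(9::nat) choose 2 = 36" by (simp add: numeral_eq_Suc)
  then have card_VV: "card VV = 46"
    using card_subsets_card_le_2[OF \<open>finite I\<close>] \<open>card I = 9\<close> by (simp add: VV_def)
  have size_R: "int (size R) = 96"
    using binary_OA_walsh_sum[OF OA, of "{}" "{0}" y y] by (simp add: R_def)
  have "(\<Sum>r\<in>#R. 4 + (if r = x then 2112 else 0)) \<le> (\<Sum>r\<in>#R. (L r)^2)"
  proof (rule sum_mset_mono)
    fix r assume r: "r \<in># R"
    have "L x = 46"
      using card_VV by (simp add: L_def walsh_def y_def)
    moreover have "4 \<le> (L r)^2" if "r \<noteq> x"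
    proof -
      have "length r = 10" "length x = 10" "r ! 0 = x ! 0"
        using r True OA by (auto simp: R_def y_def binary_OA_def)
      then have "\<exists>i\<in>I. r ! i \<noteq> y i"
        using nth_neq_above_0[of r 10 x] \<open>r \<noteq> x\<close> by (simp add: I_def y_def)
      then show ?thesis
        using walsh_sum_card_le_2_square_ge_4[OF \<open>finite I\<close> \<open>card I = 9\<close>] by (simp add: L_def VV_def)
    qed
    ultimately show "4 + (if r = x then 2112 else 0) \<le> (L r)^2" by auto
  qed
  also have "(\<Sum>r\<in>#R. (L r)^2) = 96 * 46"
    using OA_10_192_5_second_moment[OF OA, of y] card_VV by (simp add: R_def L_def VV_def I_def)
  moreover have "(\<Sum>r\<in>#R. 4 + (if r = x then 2112 else 0 :: int)) = 4 * int (size R) + 2112 * int (count R x)"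
    by (simp add: sum_mset.distrib sum_mset_delta)
  moreover have "count R x = count C x" by (simp add: R_def y_def)
  ultimately show ?thesis
    using size_R by simp
qed

lemma OA_10_192_5_walsh_coeff_dvd:
  assumes "binary_OA 10 192 5 C" "U \<subseteq> {0..<10}"
  shows "64 dvd walsh_coeff C U"
  using binary_OA_walsh_coeff_dvd[OF assms(1) _ assms(2)] by simp

lemma OA_10_192_5_sum_squares:
  assumes OA: "binary_OA 10 192 5 C"
  shows "(\<Sum>U | U \<subseteq> {0..<10} \<and> 6 \<le> card U. (walsh_coeff C U div 64)^2) = 39"
proof -
  let ?H = "{U. U \<subseteq> {0..<10::nat} \<and> 6 \<le> card U}"
  have "(\<Sum>U\<in>Pow {0..<10}. (walsh_coeff C U)^2) = 1024 * 192"
    using walsh_coeff_parseval[of C 10] OA_10_192_5_no_repeated_rows[OF OA] OA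
    by (simp add: binary_OA_def)
  moreover have "(\<Sum>U\<in>Pow {0..<10}. (walsh_coeff C U)^2) = 192^2 + (\<Sum>U\<in>?H. (walsh_coeff C U)^2)"
    using sum_Pow_eq_empty_plus_large[of "{0..<10::nat}" 6 "\<lambda>U. (walsh_coeff C U)^2"]
      binary_OA_walsh_coeff_eq_0[OF OA] OA by (simp add: binary_OA_def)
  moreover have "(walsh_coeff C U)^2 = 4096 * (walsh_coeff C U div 64)^2" if "U \<in> ?H" for U
    using OA_10_192_5_walsh_coeff_dvd[OF OA, of U] that by (auto elim!: dvdE simp: power_mult_distrib)
  then have "(\<Sum>U\<in>?H. (walsh_coeff C U)^2) = 4096 * (\<Sum>U\<in>?H. (walsh_coeff C U div 64)^2)"
    by (simp add: sum_distrib_left)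
  ultimately show ?thesis by simp
qed

lemma OA_10_192_5_odd_below:
  assumes OA: "binary_OA 10 192 5 C" and "U \<subseteq> {0..<10}" "7 \<le> card U"
  shows "odd (card {V. V \<subseteq> U \<and> 6 \<le> card V \<and> odd (walsh_coeff C V div 64)})"
proof -
  define s where "s V = walsh_coeff C V div 64" for V
  have "finite U" using assms(2) finite_subset by blast
  have coeff: "walsh_coeff C V = 64 * s V" if "V \<subseteq> U" for V
    using OA_10_192_5_walsh_coeff_dvd[OF OA, of V] that assms(2) by (simp add: s_def)
  have "(2::int) ^ 7 dvd 2 ^ card U"
    using assms(3) by (intro le_imp_power_dvd)
  then have "64 * 2 dvd (\<Sum>V\<in>Pow U. walsh_coeff C V)"
    unfolding sum_Pow_walsh_coeff[OF \<open>finite U\<close>] by simp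
  also have "(\<Sum>V\<in>Pow U. walsh_coeff C V) = 64 * (\<Sum>V\<in>Pow U. s V)"
    using coeff by (simp add: sum_distrib_left)
  finally have "even (\<Sum>V\<in>Pow U. s V)"
    by (metis dvd_mult_cancel_left zero_neq_numeral)
  moreover have "(\<Sum>V\<in>Pow U. s V) = 3 + (\<Sum>V | V \<subseteq> U \<and> 6 \<le> card V. s V)"
    using sum_Pow_eq_empty_plus_large[OF \<open>finite U\<close>, of 6 s] binary_OA_walsh_coeff_eq_0[OF OA] OA assms(2)
    by (auto simp: s_def binary_OA_def)
  ultimately have "odd (\<Sum>V | V \<subseteq> U \<and> 6 \<le> card V. s V)" by simp
  then show ?thesis
    using even_sum_iff[of "{V. V \<subseteq> U \<and> 6 \<le> card V}" s] \<open>finite U\<close> by (simp add: s_def conj_assoc)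
qed

section \<open>Families with an odd number of members below every large set\<close>

locale odd_family =
  fixes N :: "'a set" and F :: "'a set set"
  assumes finite_N: "finite N" and card_N: "card N = 10"
    and F_subset: "V \<in> F \<Longrightarrow> V \<subseteq> N"
    and F_card: "V \<in> F \<Longrightarrow> 6 \<le> card V"
    and odd_below: "U \<subseteq> N \<Longrightarrow> 7 \<le> card U \<Longrightarrow> odd (card {V\<in>F. V \<subseteq> U})"
begin

definition below :: "nat \<Rightarrow> 'a set \<Rightarrow> nat" where
  "below j u = card {V\<in>F. V \<subseteq> u \<and> card V = j}"

lemma below_small: "j < 6 \<Longrightarrow> below j u = 0"
proof -
  assume "j < 6"
  then have "{V\<in>F. V \<subseteq> u \<and> card V = j} = {}" using F_card by fastforce
  then show ?thesis unfolding below_def by (simp only: card.empty)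
qed

lemma below_card: "u \<subseteq> N \<Longrightarrow> below (card u) u = (if u \<in> F then 1 else 0)"
proof -
  assume "u \<subseteq> N"
  then have "finite u" using finite_N finite_subset by blast
  then have "{V\<in>F. V \<subseteq> u \<and> card V = card u} = (if u \<in> F then {u} else {})"
    using card_subset_eq by auto
  then show ?thesis by (simp add: below_def)
qed

lemma card_below_eq_sum: "u \<subseteq> N \<Longrightarrow> card {V\<in>F. V \<subseteq> u} = (\<Sum>j\<le>card u. below j u)"
  unfolding below_def using finite_N finite_subset by (blast intro: card_eq_sum_layers)

lemma sum_below: "j \<le> m \<Longrightarrow> (\<Sum>u | u \<subseteq> N \<and> card u = m. below j u) = below j N * ((10 - j) choose (m - j))"
  unfolding below_def using sum_card_layer_below[OF finite_N] card_N by simp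

lemma odd_below_6_7: "u \<subseteq> N \<Longrightarrow> card u = 7 \<Longrightarrow> odd (below 6 u + below 7 u)"
  using odd_below[of u] card_below_eq_sum[of u] below_card[of u]
  by (simp add: numeral_eq_Suc below_small)

lemma sum_below_6_7:
  assumes "u \<subseteq> N" "7 \<le> card u"
  shows "(\<Sum>w | w \<subseteq> u \<and> card w = 7. below 6 w + below 7 w) = (card u - 6) * below 6 u + below 7 u"
proof -
  have "finite u" using assms(1) finite_N finite_subset by blast
  then show ?thesis
    using sum_card_layer_below[of u 6 7 F] sum_card_layer_below[of u 7 7 F]
    by (simp add: below_def sum.distrib)
qed

(* (card u - 6) * below 6 u + below 7 u is a sum of card u choose 7 odd numbers, one for each
   7-subset of u. *)
lemma below_6_7_lower:
  assumes "u \<subseteq> N" "7 \<le> card u"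
  shows "card u choose 7 \<le> (card u - 6) * below 6 u + below 7 u"
    and "even ((card u - 6) * below 6 u + below 7 u) \<longleftrightarrow> even (card u choose 7)"
proof -
  have "finite u" using assms(1) finite_N finite_subset by blast
  let ?A = "{w. w \<subseteq> u \<and> card w = 7}"
  have "finite ?A" "card ?A = card u choose 7"
    using \<open>finite u\<close> by (simp_all add: n_subsets)
  moreover have "odd (below 6 w + below 7 w)" if "w \<in> ?A" for w
    using that assms(1) by (intro odd_below_6_7) auto
  ultimately show "card u choose 7 \<le> (card u - 6) * below 6 u + below 7 u"
    and "even ((card u - 6) * below 6 u + below 7 u) \<longleftrightarrow> even (card u choose 7)"
    using sum_odd_nat[of ?A "\<lambda>w. below 6 w + below 7 w"] sum_below_6_7[OF assms] by simp_all
qed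

lemma below_bound_8:
  assumes "u \<subseteq> N" "card u = 8"
  shows "5 \<le> below 6 u + below 7 u + (if u \<in> F then 1 else 0)"
proof -
  have "(8::nat) choose 7 = 8" by (simp add: numeral_eq_Suc)
  then have "8 \<le> 2 * below 6 u + below 7 u" "even (2 * below 6 u + below 7 u)"
    using below_6_7_lower[OF assms(1)] assms(2) by simp_all
  moreover have "odd (below 6 u + below 7 u + (if u \<in> F then 1 else 0))"
    using odd_below[OF assms(1)] card_below_eq_sum[OF assms(1)] below_card[OF assms(1)] assms(2)
    by (simp add: numeral_eq_Suc below_small)
  ultimately show ?thesis
    by (cases "u \<in> F") presburger+
qed

lemma below_bound_9:
  assumes "u \<subseteq> N" "card u = 9"
  shows "1 \<le> below 8 u + (if u \<in> F then 1 else 0)"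
proof -
  have "(9::nat) choose 7 = 36" by (simp add: numeral_eq_Suc)
  then have "even (3 * below 6 u + below 7 u)"
    using below_6_7_lower(2)[OF assms(1)] assms(2) by simp
  moreover have "odd (below 6 u + below 7 u + below 8 u + (if u \<in> F then 1 else 0))"
    using odd_below[OF assms(1)] card_below_eq_sum[OF assms(1)] below_card[OF assms(1)] assms(2)
    by (simp add: numeral_eq_Suc below_small)
  ultimately show ?thesis
    by (cases "u \<in> F") presburger+
qed

lemma sum_slice_indicator: "(\<Sum>u | u \<subseteq> N \<and> card u = m. if u \<in> F then 1 else 0) = below m N"
proof -
  have "(\<Sum>u | u \<subseteq> N \<and> card u = m. if u \<in> F then 1 else 0) = (\<Sum>u | u \<subseteq> N \<and> card u = m. below m u)"
    using below_card by (intro sum.cong) auto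
  also have "\<dots> = below m N"
    using sum_below[of m m] by simp
  finally show ?thesis .
qed

(* With k j = below j N, every 8-set outside F contains at least five members of sizes 6 and 7
   and every 9-set outside F contains a member of size 8; summing over all 8-sets and 9-sets gives
   6 k 6 + 3 k 7 + k 8 >= 225 and 2 k 8 + k 9 >= 10, which force k 6 + k 7 + k 8 + k 9 >= 40. *)
theorem card_ge_40: "40 \<le> card F"
proof -
  have card_slice: "card {u. u \<subseteq> N \<and> card u = m} = 10 choose m" for m
    using n_subsets[OF finite_N] card_N by simp
  have "(\<Sum>u | u \<subseteq> N \<and> card u = 8. 5) \<le> (\<Sum>u | u \<subseteq> N \<and> card u = 8. below 6 u + below 7 u + (if u \<in> F then 1 else 0))"
    using below_bound_8 by (intro sum_mono) auto
  then have eight: "225 \<le> 6 * below 6 N + 3 * below 7 N + below 8 N"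
    using sum_below[of 6 8] sum_below[of 7 8] sum_slice_indicator[of 8] card_slice[of 8]
    by (simp add: sum.distrib numeral_eq_Suc)
  have "(\<Sum>u | u \<subseteq> N \<and> card u = 9. 1) \<le> (\<Sum>u | u \<subseteq> N \<and> card u = 9. below 8 u + (if u \<in> F then 1 else 0))"
    using below_bound_9 by (intro sum_mono) auto
  then have nine: "10 \<le> 2 * below 8 N + below 9 N"
    using sum_below[of 8 9] sum_slice_indicator[of 9] card_slice[of 9]
    by (simp add: sum.distrib numeral_eq_Suc)
  have "{V\<in>F. V \<subseteq> N} = F" using F_subset by auto
  then have "card F = (\<Sum>j\<le>10. below j N)"
    using card_below_eq_sum[of N] card_N by simp
  then have "below 6 N + below 7 N + below 8 N + below 9 N \<le> card F"
    by (simp add: numeral_eq_Suc)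
  then show ?thesis
    using eight nine by linarith
qed

end

theorem corollary4p2:
  shows "\<not> (\<exists>C. binary_OA 10 192 5 C)"
proof
  assume "\<exists>C. binary_OA 10 192 5 C"
  then obtain C where OA: "binary_OA 10 192 5 C" ..
  define F where "F = {U. U \<subseteq> {0..<10::nat} \<and> 6 \<le> card U \<and> odd (walsh_coeff C U div 64)}"
  have "int (card F) \<le> 39"
    using card_odd_le_sum_squares[of "{U. U \<subseteq> {0..<10::nat} \<and> 6 \<le> card U}" "\<lambda>U. walsh_coeff C U div 64"]
      OA_10_192_5_sum_squares[OF OA] by (simp add: F_def conj_assoc)
  moreover have "odd_family {0..<10} F"
  proof
    fix U :: "nat set" assume U: "U \<subseteq> {0..<10}" "7 \<le> card U"
    then have "{V\<in>F. V \<subseteq> U} = {V. V \<subseteq> U \<and> 6 \<le> card V \<and> odd (walsh_coeff C V div 64)}"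
      by (auto simp: F_def)
    then show "odd (card {V\<in>F. V \<subseteq> U})"
      using OA_10_192_5_odd_below[OF OA U] by simp
  qed (auto simp: F_def)
  ultimately show False
    using odd_family.card_ge_40 by fastforce
qed

end
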